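(* Let $q\geq 1$, and assume that the following convergence-of-means condition holds: with $$\mu_N=\frac1N\sum_{i=1}^N\lambda_i,\qquad \nu_N=\frac{\sum_{i=1}^N\lambda_i^2}{\sum_{i=1}^N\lambda_i},$$ there exist constants $\mu\in(0,\infty)$, $\nu\in(1,\infty)$ and $\alpha_1>0$ such that $|\mu_N-\mu|=O(N^{-\alpha_1})$ and $|\nu_N-\nu|=O(N^{-\alpha_1})$. Then $$\limsup_{N\to\infty}\sum_{n=0}^{\infty} n^q g^{(N)}_n<\infty \quad\text{if and only if}\quad \limsup_{N\to\infty}\frac1N\sum_{i=1}^N\lambda_i^{q+1}<\infty.$$
   Context: For each $N$, $\{\lambda_i\}_{i=1}^N$ is a sequence of positive reals (the capacities of the nodes $1,\dots,N$ of a random graph on $N$ nodes). Define the probability mass function $$g^{(N)}_n=\frac{1}{N\mu_N}\sum_{i=1}^N e^{-\lambda_i}\frac{\lambda_i^{n+1}}{n!},\qquad n\geq 0,$$ where $\mu_N=\frac1N\sum_{i=1}^N\lambda_i$. *)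

theory Defs
  imports "HOL-Analysis.Analysis" "HOL-Library.Landau_Symbols"
begin

text \<open>lam N i is the capacity of node i (1 \<le> i \<le> N) in the graph on N nodes.\<close>

definition muN :: "(nat \<Rightarrow> nat \<Rightarrow> real) \<Rightarrow> nat \<Rightarrow> real" where
  "muN lam N = (\<Sum>i=1..N. lam N i) / real N"

definition nuN :: "(nat \<Rightarrow> nat \<Rightarrow> real) \<Rightarrow> nat \<Rightarrow> real" where
  "nuN lam N = (\<Sum>i=1..N. (lam N i)^2) / (\<Sum>i=1..N. lam N i)"

definition gN :: "(nat \<Rightarrow> nat \<Rightarrow> real) \<Rightarrow> nat \<Rightarrow> nat \<Rightarrow> real" where
  "gN lam N n = (1 / (real N * muN lam N)) *
     (\<Sum>i=1..N. exp (- lam N i) * (lam N i)^(n+1) / fact n)"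

end

theory Submission
  imports Defs
begin

text \<open>Write X_l for a Poisson(l) random variable. Summing over the nodes,
  sum_n n^q g_n = (sum_i lam_i E[X_{lam_i}^q]) / (sum_i lam_i). Jensen's inequality gives
  E[X_l^q] \<ge> l^q, and the size-bias identity E[X_l f(X_l)] = l E[f(X_l + 1)] together with an
  induction on the ceiling of q gives E[X_l^q] \<le> K (l + l^q). Hence, with
  T_N = (1/N) sum_i lam_i^(q+1), the moment lies between T_N / mu_N and K (nu_N + T_N / mu_N);
  since mu_N \<rightarrow> mu > 0 and nu_N converges, it is bounded iff T_N is.\<close>

lemma powr_tangent_le:
  fixes q x a :: real
  assumes "1 \<le> q" "0 \<le> x" "0 < a"
  shows "a powr q + q * a powr (q - 1) * (x - a) \<le> x powr q"
proof (cases "x = 0")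
  case True
  have "a powr q = a * a powr (q - 1)"
    using assms by (simp add: powr_mult_base)
  with True assms show ?thesis by (simp add: algebra_simps)
next
  case False
  have deriv: "((\<lambda>x. x powr q) has_field_derivative q * a powr (q - 1)) (at a within {0<..})"
    using assms by (auto intro!: derivative_eq_intros)
  have "q * a powr (q - 1) * (x - a) \<le> x powr q - a powr q"
    by (rule convex_on_imp_above_tangent[OF powr_convex[OF assms(1)] _ _ _ deriv])
      (use assms False in \<open>simp_all add: connected_Ioi interior_open\<close>)
  then show ?thesis by simp
qed

lemma powr_concave:
  assumes "0 \<le> p" "p \<le> 1"
  shows "concave_on {0<..} (\<lambda>x::real. x powr p)"
proof (rule f''_le0_imp_concave)
  show "((\<lambda>x. x powr p) has_real_derivative p * x powr (p - 1)) (at x)"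
    and "((\<lambda>x. p * x powr (p - 1)) has_real_derivative p * ((p - 1) * x powr (p - 1 - 1))) (at x)"
    if "x \<in> {0<..}" for x
    using that by (auto intro!: derivative_eq_intros)
  show "p * ((p - 1) * x powr (p - 1 - 1)) \<le> 0" for x
    using assms by (simp add: mult_nonneg_nonpos mult_nonpos_nonneg)
qed simp

lemma powr_le_tangent:
  fixes r x a :: real
  assumes "0 \<le> r" "r \<le> 1" "0 < x" "0 < a"
  shows "x powr r \<le> a powr r + r * a powr (r - 1) * (x - a)"
proof -
  have convex: "convex_on {0<..} (\<lambda>x. - (x powr r))"
    using powr_concave[OF assms(1,2)] by (simp add: concave_on_def)
  have deriv: "((\<lambda>x. - (x powr r)) has_field_derivative - (r * a powr (r - 1))) (at a within {0<..})"
    using assms by (auto intro!: derivative_eq_intros)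
  have "- (r * a powr (r - 1)) * (x - a) \<le> - (x powr r) - - (a powr r)"
    by (rule convex_on_imp_above_tangent[OF convex _ _ _ deriv])
      (use assms in \<open>simp_all add: connected_Ioi interior_open\<close>)
  then show ?thesis by simp
qed

definition poisson_weight :: "real \<Rightarrow> nat \<Rightarrow> real" where
  "poisson_weight l n = exp (- l) * l ^ n / fact n"

lemma poisson_weight_nonneg: "0 \<le> l \<Longrightarrow> 0 \<le> poisson_weight l n"
  by (simp add: poisson_weight_def)

lemma poisson_weight_sums: "poisson_weight l sums 1"
proof -
  have "(\<lambda>n. exp (- l) * (l ^ n /\<^sub>R fact n)) sums (exp (- l) * exp l)"
    by (intro sums_mult exp_converges)
  moreover have "(\<lambda>n. exp (- l) * (l ^ n /\<^sub>R fact n)) = poisson_weight l"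
    by (auto simp: poisson_weight_def divide_inverse)
  ultimately show ?thesis
    by (simp flip: exp_add)
qed

lemma poisson_weight_Suc: "real (Suc n) * poisson_weight l (Suc n) = l * poisson_weight l n"
  unfolding poisson_weight_def fact_Suc by (simp add: field_simps del: of_nat_Suc)

lemma poisson_size_bias_sums:
  assumes "(\<lambda>n. f (Suc n) * poisson_weight l n) sums s"
  shows "(\<lambda>n. real n * f n * poisson_weight l n) sums (l * s)"
proof -
  have "real (Suc n) * f (Suc n) * poisson_weight l (Suc n)
      = f (Suc n) * (real (Suc n) * poisson_weight l (Suc n))" for n
    by (simp only: mult_ac)
  then have "(\<lambda>n. real (Suc n) * f (Suc n) * poisson_weight l (Suc n)) sums (l * s)"
    using sums_mult[OF assms, of l] by (simp only: poisson_weight_Suc mult_ac)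
  then show ?thesis
    using sums_Suc_iff[of "\<lambda>n. real n * f n * poisson_weight l n"] by simp
qed

lemma poisson_mean_sums: "(\<lambda>n. real n * poisson_weight l n) sums l"
  using poisson_size_bias_sums[of "\<lambda>_. 1" l 1] poisson_weight_sums by simp

lemma poisson_affine_sums: "(\<lambda>n. (a + c * (real n - l)) * poisson_weight l n) sums a"
proof -
  have "(\<lambda>n. a * poisson_weight l n + c * (real n * poisson_weight l n) - c * l * poisson_weight l n)
      sums (a * 1 + c * l - c * l * 1)"
    by (intro sums_diff sums_add sums_mult poisson_weight_sums poisson_mean_sums)
  then show ?thesis by (simp add: algebra_simps)
qed

lemma summable_poisson_powr:
  assumes "0 \<le> r" "0 \<le> l"
  shows "summable (\<lambda>n. (real n + 1) powr r * poisson_weight l n)"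
proof (rule summable_comparison_test')
  show "summable (\<lambda>n. exp (- l) * ((exp r * l) ^ n /\<^sub>R fact n))"
    by (intro summable_mult summable_exp_generic)
  show "norm ((real n + 1) powr r * poisson_weight l n) \<le> exp (- l) * ((exp r * l) ^ n /\<^sub>R fact n)"
    for n
  proof -
    have "(real n + 1) powr r = exp (r * ln (real n + 1))"
      by (simp add: powr_def)
    also have "\<dots> \<le> exp (r * real n)"
      using assms ln_le_minus_one[of "real n + 1"] by (intro exp_mono mult_left_mono) auto
    also have "\<dots> = exp r ^ n"
      by (simp add: mult.commute flip: exp_of_nat_mult)
    finally have "norm ((real n + 1) powr r * poisson_weight l n) \<le> exp r ^ n * poisson_weight l n"
      using poisson_weight_nonneg[OF assms(2)] by (simp add: mult_right_mono)
    then show ?thesis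
      by (simp add: poisson_weight_def power_mult_distrib divide_inverse mult_ac)
  qed
qed

definition poisson_shifted_moment :: "real \<Rightarrow> real \<Rightarrow> real" where
  "poisson_shifted_moment r l = (\<Sum>n. (real n + 1) powr r * poisson_weight l n)"

lemma poisson_shifted_moment_sums:
  "0 \<le> r \<Longrightarrow> 0 \<le> l \<Longrightarrow>
    (\<lambda>n. (real n + 1) powr r * poisson_weight l n) sums poisson_shifted_moment r l"
  unfolding poisson_shifted_moment_def by (intro summable_sums summable_poisson_powr)

lemma poisson_shifted_moment_nonneg:
  "0 \<le> r \<Longrightarrow> 0 \<le> l \<Longrightarrow> 0 \<le> poisson_shifted_moment r l"
  unfolding poisson_shifted_moment_def
  by (intro suminf_nonneg summable_poisson_powr mult_nonneg_nonneg poisson_weight_nonneg) auto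

lemma poisson_shifted_moment_le_of_le_one:
  assumes "0 \<le> r" "r \<le> 1" "0 < l"
  shows "poisson_shifted_moment r l \<le> (1 + l) powr r"
proof (rule sums_le[OF _ poisson_shifted_moment_sums poisson_affine_sums])
  fix n
  have "(real n + 1) powr r \<le> (1 + l) powr r + r * (1 + l) powr (r - 1) * (real n - l)"
    using powr_le_tangent[of r "real n + 1" "1 + l"] assms by (simp add: algebra_simps)
  then show "(real n + 1) powr r * poisson_weight l n
      \<le> ((1 + l) powr r + r * (1 + l) powr (r - 1) * (real n - l)) * poisson_weight l n"
    using assms by (intro mult_right_mono poisson_weight_nonneg) auto
qed (use assms in auto)

lemma poisson_shifted_moment_step:
  assumes "1 \<le> r" "0 < l"
  shows "poisson_shifted_moment r l \<le> (2 powr (r - 1) * l + 1) * poisson_shifted_moment (r - 1) l"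
proof -
  \<comment> \<open>Split (n+1)^r = n (n+1)^(r-1) + (n+1)^(r-1); by the size-bias identity the first part
    contributes l E[(X+2)^(r-1)] \<le> 2^(r-1) l E[(X+1)^(r-1)].\<close>
  let ?M = "poisson_shifted_moment (r - 1) l"
  let ?f = "\<lambda>n. (real n + 1) powr (r - 1)"
  have w: "0 \<le> poisson_weight l n" for n
    using assms by (intro poisson_weight_nonneg) auto
  have M_sums: "(\<lambda>n. ?f n * poisson_weight l n) sums ?M"
    using assms by (intro poisson_shifted_moment_sums) auto
  have shift_le: "?f (Suc n) * poisson_weight l n \<le> 2 powr (r - 1) * (?f n * poisson_weight l n)"
    for n
  proof -
    have "?f (Suc n) \<le> (2 * (real n + 1)) powr (r - 1)"
      using assms by (intro powr_mono2) auto
    also have "\<dots> = 2 powr (r - 1) * ?f n"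
      by (rule powr_mult)
    finally show ?thesis
      by (metis mult.assoc mult_right_mono w)
  qed
  have "summable (\<lambda>n. ?f (Suc n) * poisson_weight l n)"
    using shift_le w
    by (intro summable_comparison_test'[OF summable_mult[OF sums_summable[OF M_sums]]]) auto
  then obtain s where s: "(\<lambda>n. ?f (Suc n) * poisson_weight l n) sums s"
    by (auto simp: summable_def)
  have s_le: "s \<le> 2 powr (r - 1) * ?M"
    by (rule sums_le[OF shift_le s sums_mult[OF M_sums]])
  have "(\<lambda>n. real n * ?f n * poisson_weight l n + ?f n * poisson_weight l n) sums (l * s + ?M)"
    by (intro sums_add poisson_size_bias_sums s M_sums)
  moreover have "real n * ?f n * poisson_weight l n + ?f n * poisson_weight l n
      = (real n + 1) powr r * poisson_weight l n" for n
  proof -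
    have "(real n + 1) powr r = (real n + 1) * ?f n"
      using powr_mult_base[of "real n + 1" "r - 1"] by simp
    then show ?thesis
      by (simp only:) (simp add: algebra_simps)
  qed
  ultimately have "poisson_shifted_moment r l = l * s + ?M"
    using assms by (intro sums_unique2[OF poisson_shifted_moment_sums]) auto
  also have "\<dots> \<le> (2 powr (r - 1) * l + 1) * ?M"
    using s_le assms by (simp add: algebra_simps mult_left_mono)
  finally show ?thesis .
qed

lemma poisson_shifted_moment_bound:
  assumes "0 \<le> r"
  obtains K where "0 < K" "\<And>l. 0 < l \<Longrightarrow> poisson_shifted_moment r l \<le> K * (1 + l) powr r"
proof -
  have bound: "\<exists>K>0. \<forall>l>0. poisson_shifted_moment r l \<le> K * (1 + l) powr r"
    if "0 \<le> r" "r \<le> real n + 1" for n r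
    using that
  proof (induction n arbitrary: r)
    case 0
    then show ?case
      using poisson_shifted_moment_le_of_le_one by (intro exI[of _ 1]) auto
  next
    case (Suc n)
    show ?case
    proof (cases "r \<le> 1")
      case True
      then show ?thesis
        using Suc.prems poisson_shifted_moment_le_of_le_one by (intro exI[of _ 1]) auto
    next
      case False
      obtain K where K: "0 < K" "\<forall>l>0. poisson_shifted_moment (r - 1) l \<le> K * (1 + l) powr (r - 1)"
        using Suc.IH[of "r - 1"] Suc.prems False by auto
      have "poisson_shifted_moment r l \<le> (2 powr (r - 1) * K) * (1 + l) powr r" if "0 < l" for l
      proof -
        have "poisson_shifted_moment r l
            \<le> (2 powr (r - 1) * l + 1) * poisson_shifted_moment (r - 1) l"
          using False that by (intro poisson_shifted_moment_step) auto
        also have "\<dots> \<le> (2 powr (r - 1) * (1 + l)) * (K * (1 + l) powr (r - 1))"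
        proof (rule mult_mono)
          have "1 \<le> 2 powr (r - 1)"
            using False by (intro ge_one_powr_ge_zero) auto
          then show "2 powr (r - 1) * l + 1 \<le> 2 powr (r - 1) * (1 + l)"
            by (simp add: algebra_simps)
        qed (use K that False poisson_shifted_moment_nonneg in auto)
        also have "\<dots> = (2 powr (r - 1) * K) * ((1 + l) * (1 + l) powr (r - 1))"
          by (simp add: algebra_simps)
        also have "(1 + l) * (1 + l) powr (r - 1) = (1 + l) powr r"
          using that by (simp add: powr_mult_base)
        finally show ?thesis .
      qed
      then show ?thesis
        using K(1) by (intro exI[of _ "2 powr (r - 1) * K"]) auto
    qed
  qed
  have "r \<le> real (nat \<lceil>r\<rceil>) + 1"
    using of_nat_ceiling[of r] by linarith
  then obtain K where "0 < K" "\<forall>l>0. poisson_shifted_moment r l \<le> K * (1 + l) powr r"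
    using bound[OF assms] by blast
  then show ?thesis
    using that by simp
qed

definition poisson_moment :: "real \<Rightarrow> real \<Rightarrow> real" where
  "poisson_moment q l = (\<Sum>n. real n powr q * poisson_weight l n)"

lemma poisson_moment_sums_shifted:
  assumes "1 \<le> q" "0 \<le> l"
  shows "(\<lambda>n. real n powr q * poisson_weight l n) sums (l * poisson_shifted_moment (q - 1) l)"
proof -
  have "real n powr q = real n * real n powr (q - 1)" for n
    using powr_mult_base[of "real n" "q - 1"] by simp
  moreover have "(\<lambda>n. real n * real n powr (q - 1) * poisson_weight l n)
      sums (l * poisson_shifted_moment (q - 1) l)"
    by (intro poisson_size_bias_sums)
      (use poisson_shifted_moment_sums[of "q - 1" l] assms in \<open>simp add: ac_simps\<close>)
  ultimately show ?thesis by simp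
qed

lemma poisson_moment_eq:
  "1 \<le> q \<Longrightarrow> 0 \<le> l \<Longrightarrow> poisson_moment q l = l * poisson_shifted_moment (q - 1) l"
  unfolding poisson_moment_def by (rule sums_unique[symmetric, OF poisson_moment_sums_shifted])

lemma poisson_moment_sums:
  "1 \<le> q \<Longrightarrow> 0 \<le> l \<Longrightarrow> (\<lambda>n. real n powr q * poisson_weight l n) sums poisson_moment q l"
  using poisson_moment_sums_shifted poisson_moment_eq by simp

lemma poisson_moment_ge:
  assumes "1 \<le> q" "0 < l"
  shows "l powr q \<le> poisson_moment q l"
proof (rule sums_le[OF _ poisson_affine_sums poisson_moment_sums])
  show "(l powr q + q * l powr (q - 1) * (real n - l)) * poisson_weight l n
      \<le> real n powr q * poisson_weight l n" for n
    using assms powr_tangent_le[of q "real n" l]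
    by (intro mult_right_mono poisson_weight_nonneg) auto
qed (use assms in auto)

lemma poisson_moment_le:
  assumes "1 \<le> q"
  obtains K where "0 < K" "\<And>l. 0 < l \<Longrightarrow> poisson_moment q l \<le> K * (l + l powr q)"
proof -
  obtain K where K: "0 < K" "\<And>l. 0 < l \<Longrightarrow> poisson_shifted_moment (q - 1) l \<le> K * (1 + l) powr (q - 1)"
    using assms poisson_shifted_moment_bound[of "q - 1"] by auto
  have "poisson_moment q l \<le> (K * 2 powr (q - 1)) * (l + l powr q)" if l: "0 < l" for l
  proof -
    have "max 1 l powr (q - 1) \<le> 1 + l powr (q - 1)"
      by (cases "l \<le> 1") (auto simp: max_def)
    then have "(1 + l) powr (q - 1) \<le> 2 powr (q - 1) * (1 + l powr (q - 1))"
      using order_trans[OF powr_mono2[of "q - 1" "1 + l" "2 * max 1 l"]] assms l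
      by (simp add: powr_mult)
    then have "poisson_shifted_moment (q - 1) l \<le> K * (2 powr (q - 1) * (1 + l powr (q - 1)))"
      using K order_trans[OF K(2)[OF l] mult_left_mono] by simp
    then have "poisson_moment q l \<le> l * (K * (2 powr (q - 1) * (1 + l powr (q - 1))))"
      unfolding poisson_moment_eq[OF assms less_imp_le[OF l]] using l by (intro mult_left_mono) auto
    also have "\<dots> = (K * 2 powr (q - 1)) * (l + l * l powr (q - 1))"
      by (simp add: algebra_simps)
    also have "l * l powr (q - 1) = l powr q"
      using l by (simp add: powr_mult_base)
    finally show ?thesis .
  qed
  then show ?thesis
    using that[of "K * 2 powr (q - 1)"] K(1) by auto
qed

lemma limsup_ennreal_less_top_iff_Bseq:
  fixes f :: "nat \<Rightarrow> real"
  assumes "\<And>n. 0 \<le> f n"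
  shows "limsup (\<lambda>n. ennreal (f n)) < \<infinity> \<longleftrightarrow> Bseq f"
proof
  assume "limsup (\<lambda>n. ennreal (f n)) < \<infinity>"
  then obtain b where "limsup (\<lambda>n. ennreal (f n)) = ennreal b" "0 \<le> b"
    by (cases "limsup (\<lambda>n. ennreal (f n))") auto
  then have "limsup (\<lambda>n. ennreal (f n)) < ennreal (b + 1)"
    by (simp add: ennreal_less_iff)
  then have "eventually (\<lambda>n. ennreal (f n) < ennreal (b + 1)) sequentially"
    by (rule Limsup_lessD)
  then have "eventually (\<lambda>n. norm (f n) \<le> norm (b + 1)) sequentially"
    by (rule eventually_mono) (use assms in \<open>simp add: ennreal_less_iff del: ennreal_plus\<close>)
  then show "Bseq f"
    by (rule Bseq_eventually_mono) simp
next
  assume "Bseq f"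
  then obtain K where "\<forall>n. norm (f n) \<le> K"
    using BseqD by blast
  then have "limsup (\<lambda>n. ennreal (f n)) \<le> ennreal K"
    using assms by (intro Limsup_bounded always_eventually allI ennreal_leI) auto
  then show "limsup (\<lambda>n. ennreal (f n)) < \<infinity>"
    using order.strict_trans1 by fastforce
qed

lemma Bseq_add_Bseq:
  fixes f g :: "nat \<Rightarrow> 'a::real_normed_vector"
  assumes "Bseq f" "Bseq g"
  shows "Bseq (\<lambda>n. f n + g n)"
proof -
  obtain K L where "\<And>n. norm (f n) \<le> K" "\<And>n. norm (g n) \<le> L"
    using assms by (auto elim!: BseqE)
  then have "norm (f n + g n) \<le> K + L" for n
    by (meson add_mono norm_triangle_le)
  then show ?thesis by (rule BseqI')
qed

lemma Bseq_iff_Bseq_mutual_bounds: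
  fixes S T m v :: "nat \<Rightarrow> real"
  assumes "m \<longlonglongrightarrow> mu" "mu \<noteq> 0" "convergent v"
    and "\<And>N. 0 \<le> T N" "\<And>N. T N \<le> m N * S N"
    and "\<And>N. 0 \<le> S N" "\<And>N. S N \<le> K * (v N + T N / m N)"
  shows "Bseq S \<longleftrightarrow> Bseq T"
proof
  assume "Bseq S"
  moreover have "Bseq m"
    using assms(1) by (intro convergent_imp_Bseq convergentI)
  ultimately have "Bseq (\<lambda>N. m N * S N)"
    by (rule Bseq_mult[rotated])
  moreover have "eventually (\<lambda>N. norm (T N) \<le> norm (m N * S N)) sequentially"
    using assms(4) order_trans[OF assms(5) abs_ge_self]
    by (intro always_eventually allI) simp
  ultimately show "Bseq T"
    by (rule Bseq_eventually_mono[rotated])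
next
  assume "Bseq T"
  moreover have "Bseq (\<lambda>N. inverse (m N))"
    using convergentI[OF tendsto_inverse[OF assms(1,2)]] by (rule convergent_imp_Bseq)
  ultimately have "Bseq (\<lambda>N. K * (v N + T N * inverse (m N)))"
    using assms(3) by (intro Bseq_mult Bseq_add_Bseq) (simp_all add: convergent_imp_Bseq)
  moreover have "eventually (\<lambda>N. norm (S N) \<le> norm (K * (v N + T N * inverse (m N)))) sequentially"
    using assms(6) order_trans[OF assms(7) abs_ge_self]
    by (intro always_eventually allI) (simp add: divide_inverse)
  ultimately show "Bseq S"
    by (rule Bseq_eventually_mono[rotated])
qed

lemma tendsto_of_bigo_powr:
  fixes f :: "nat \<Rightarrow> real"
  assumes "(\<lambda>N. \<bar>f N - c\<bar>) \<in> O(\<lambda>N. real N powr (- \<alpha>))" "0 < \<alpha>"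
  shows "f \<longlonglongrightarrow> c"
proof -
  obtain C where C: "eventually (\<lambda>N. norm \<bar>f N - c\<bar> \<le> C * norm (real N powr (- \<alpha>))) sequentially"
    using assms(1) by (elim landau_o.bigE)
  have "(\<lambda>N. real N powr (- \<alpha>)) \<longlonglongrightarrow> 0"
    using assms(2) by (intro tendsto_neg_powr filterlim_real_sequentially) simp
  then have "(\<lambda>N. C * norm (real N powr (- \<alpha>))) \<longlonglongrightarrow> 0"
    by (intro tendsto_mult_right_zero tendsto_norm_zero)
  then have "(\<lambda>N. \<bar>f N - c\<bar>) \<longlonglongrightarrow> 0"
    by (rule Lim_null_comparison[OF C])
  then show ?thesis
    by (simp add: LIM_zero_iff tendsto_rabs_zero_iff)
qed

lemma real_mult_muN: "real N * muN lam N = (\<Sum>i=1..N. lam N i)"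
  by (cases "N = 0") (simp_all add: muN_def)

lemma gN_eq_poisson_weight:
  "gN lam N n = (\<Sum>i=1..N. lam N i * poisson_weight (lam N i) n) / (\<Sum>i=1..N. lam N i)"
  unfolding gN_def real_mult_muN poisson_weight_def
  by (simp add: sum_divide_distrib algebra_simps)

lemma gN_nonneg:
  assumes "\<And>i. 1 \<le> i \<Longrightarrow> i \<le> N \<Longrightarrow> 0 < lam N i"
  shows "0 \<le> gN lam N n"
  unfolding gN_eq_poisson_weight using assms
  by (intro divide_nonneg_nonneg sum_nonneg mult_nonneg_nonneg poisson_weight_nonneg) (auto intro: less_imp_le)

definition gN_moment :: "(nat \<Rightarrow> nat \<Rightarrow> real) \<Rightarrow> real \<Rightarrow> nat \<Rightarrow> real" where
  "gN_moment lam q N = (\<Sum>i=1..N. lam N i * poisson_moment q (lam N i)) / (\<Sum>i=1..N. lam N i)"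

lemma gN_moment_nonneg:
  assumes "\<And>i. 1 \<le> i \<Longrightarrow> i \<le> N \<Longrightarrow> 0 < lam N i" "1 \<le> q"
  shows "0 \<le> gN_moment lam q N"
  unfolding gN_moment_def using assms order_trans[OF powr_ge_zero poisson_moment_ge[OF assms(2)]]
  by (intro divide_nonneg_nonneg sum_nonneg mult_nonneg_nonneg) (auto intro: less_imp_le)

lemma sums_gN_moment:
  assumes "\<And>i. 1 \<le> i \<Longrightarrow> i \<le> N \<Longrightarrow> 0 < lam N i" "1 \<le> q"
  shows "(\<lambda>n. real n powr q * gN lam N n) sums gN_moment lam q N"
proof -
  have "(\<lambda>n. (\<Sum>i=1..N. lam N i * (real n powr q * poisson_weight (lam N i) n)) / (\<Sum>i=1..N. lam N i))
      sums ((\<Sum>i=1..N. lam N i * poisson_moment q (lam N i)) / (\<Sum>i=1..N. lam N i))"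
    using assms by (intro sums_divide sums_sum sums_mult poisson_moment_sums) (auto intro: less_imp_le)
  then show ?thesis
    by (simp add: gN_moment_def gN_eq_poisson_weight sum_distrib_left algebra_simps)
qed

lemma power_mean_le_muN_mult_gN_moment:
  assumes "\<And>i. 1 \<le> i \<Longrightarrow> i \<le> N \<Longrightarrow> 0 < lam N i" "1 \<le> q"
  shows "(\<Sum>i=1..N. lam N i powr (q + 1)) / real N
    \<le> muN lam N * gN_moment lam q N"
proof (cases "N = 0")
  case False
  have "lam N i powr (q + 1) \<le> lam N i * poisson_moment q (lam N i)" if "i \<in> {1..N}" for i
  proof -
    have l: "0 < lam N i"
      using assms(1) that by simp
    then have "lam N i powr (q + 1) = lam N i * lam N i powr q"
      using powr_mult_base[of "lam N i" q] by (simp add: add.commute)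
    then show ?thesis
      using poisson_moment_ge[OF assms(2) l] l by (simp add: mult_left_mono)
  qed
  then have "(\<Sum>i=1..N. lam N i powr (q + 1)) \<le> (\<Sum>i=1..N. lam N i * poisson_moment q (lam N i))"
    by (rule sum_mono)
  moreover have "0 < (\<Sum>i=1..N. lam N i)"
    using assms False by (intro sum_pos) auto
  ultimately show ?thesis
    by (simp add: gN_moment_def muN_def divide_right_mono)
qed (simp add: muN_def)

lemma gN_moment_le:
  assumes "\<And>i. 1 \<le> i \<Longrightarrow> i \<le> N \<Longrightarrow> 0 < lam N i"
    and "\<And>l. 0 < l \<Longrightarrow> poisson_moment q l \<le> K * (l + l powr q)"
  shows "gN_moment lam q N
    \<le> K * (nuN lam N + ((\<Sum>i=1..N. lam N i powr (q + 1)) / real N) / muN lam N)"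
proof (cases "N = 0")
  case False
  have "lam N i * poisson_moment q (lam N i) \<le> K * ((lam N i)\<^sup>2 + lam N i powr (q + 1))"
    if "i \<in> {1..N}" for i
  proof -
    have l: "0 < lam N i"
      using assms(1) that by simp
    then have "lam N i * poisson_moment q (lam N i) \<le> lam N i * (K * (lam N i + lam N i powr q))"
      using assms(2)[OF l] by (intro mult_left_mono) auto
    also have "\<dots> = K * ((lam N i)\<^sup>2 + lam N i * lam N i powr q)"
      by (simp add: algebra_simps power2_eq_square)
    also have "lam N i * lam N i powr q = lam N i powr (q + 1)"
      using powr_mult_base[of "lam N i" q] l by (simp add: add.commute)
    finally show ?thesis .
  qed
  then have "(\<Sum>i=1..N. lam N i * poisson_moment q (lam N i))
      \<le> (\<Sum>i=1..N. K * ((lam N i)\<^sup>2 + lam N i powr (q + 1)))"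
    by (rule sum_mono)
  also have "\<dots> = K * ((\<Sum>i=1..N. (lam N i)\<^sup>2) + (\<Sum>i=1..N. lam N i powr (q + 1)))"
    by (simp only: sum.distrib[symmetric] sum_distrib_left)
  finally have "(\<Sum>i=1..N. lam N i * poisson_moment q (lam N i)) / (\<Sum>i=1..N. lam N i)
      \<le> K * ((\<Sum>i=1..N. (lam N i)\<^sup>2) + (\<Sum>i=1..N. lam N i powr (q + 1))) / (\<Sum>i=1..N. lam N i)"
    using assms(1) by (intro divide_right_mono sum_nonneg) (auto intro: less_imp_le)
  also have "\<dots> = K * ((\<Sum>i=1..N. (lam N i)\<^sup>2) / (\<Sum>i=1..N. lam N i)
      + (\<Sum>i=1..N. lam N i powr (q + 1)) / (\<Sum>i=1..N. lam N i))"
    by (metis add_divide_distrib times_divide_eq_right)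
  also have "\<dots> = K * (nuN lam N + ((\<Sum>i=1..N. lam N i powr (q + 1)) / real N) / muN lam N)"
    using False by (simp add: nuN_def muN_def)
  finally show ?thesis
    unfolding gN_moment_def .
qed (simp add: gN_moment_def nuN_def)

theorem lemmaA2:
  fixes lam :: "nat \<Rightarrow> nat \<Rightarrow> real" and q mu nu \<alpha>1 :: real
  assumes pos: "\<And>N i. 1 \<le> i \<Longrightarrow> i \<le> N \<Longrightarrow> lam N i > 0"
    and q: "q \<ge> 1"
    and mu: "0 < mu" and nu: "1 < nu" and alpha: "\<alpha>1 > 0"
    and conv_mu: "(\<lambda>N. \<bar>muN lam N - mu\<bar>) \<in> O(\<lambda>N. real N powr (-\<alpha>1))"
    and conv_nu: "(\<lambda>N. \<bar>nuN lam N - nu\<bar>) \<in> O(\<lambda>N. real N powr (-\<alpha>1))"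
  shows "limsup (\<lambda>N. \<Sum>n. ennreal (real n powr q * gN lam N n)) < \<infinity>
     \<longleftrightarrow> limsup (\<lambda>N. ennreal ((\<Sum>i=1..N. lam N i powr (q+1)) / real N)) < \<infinity>"
proof -
  obtain K where K: "\<And>l. 0 < l \<Longrightarrow> poisson_moment q l \<le> K * (l + l powr q)"
    using poisson_moment_le[OF q] by blast
  define T where "T N = (\<Sum>i=1..N. lam N i powr (q + 1)) / real N" for N
  have moment_nonneg: "0 \<le> gN_moment lam q N" for N
    using pos q by (intro gN_moment_nonneg)
  have T_nonneg: "0 \<le> T N" for N
    unfolding T_def by (intro divide_nonneg_nonneg sum_nonneg) auto
  have "(\<Sum>n. ennreal (real n powr q * gN lam N n)) = ennreal (gN_moment lam q N)" for N
    using pos q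
    by (intro suminf_ennreal_eq sums_gN_moment mult_nonneg_nonneg powr_ge_zero gN_nonneg) auto
  moreover have "Bseq (gN_moment lam q) \<longleftrightarrow> Bseq T"
  proof (rule Bseq_iff_Bseq_mutual_bounds)
    show "muN lam \<longlonglongrightarrow> mu"
      by (rule tendsto_of_bigo_powr[OF conv_mu alpha])
    show "convergent (nuN lam)"
      by (rule convergentI[OF tendsto_of_bigo_powr[OF conv_nu alpha]])
    show "T N \<le> muN lam N * gN_moment lam q N" for N
      unfolding T_def using pos q by (rule power_mean_le_muN_mult_gN_moment)
    show "gN_moment lam q N \<le> K * (nuN lam N + T N / muN lam N)" for N
      unfolding T_def using pos K by (rule gN_moment_le)
  qed (use mu T_nonneg moment_nonneg in auto)
  ultimately show ?thesis
    using limsup_ennreal_less_top_iff_Bseq moment_nonneg T_nonneg unfolding T_def by simp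
qed

end
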